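(* Let $d \geq 3$ and let $P$ be the Markov kernel on $\mathbb{S}^{d-1} \times \mathcal{B}(\mathbb{S}^{d-1})$ defined by \[ P(x,A) = \frac{1}{2\pi\,\sigma^{(x)}_{d-2}(\mathbb{S}^{d-2}_x)} \int_{\mathbb{S}^{d-2}_x} \int_0^{2\pi} \mathbb{1}_A\big(\cos(\omega)x + \sin(\omega) z\big)\, \mathrm{d}\omega\, \sigma^{(x)}_{d-2}(\mathrm{d}z), \qquad x \in \mathbb{S}^{d-1},\ A \in \mathcal{B}(\mathbb{S}^{d-1}). \] Then $P$ is Wasserstein contractive with rate \[ \rho := \frac{1}{2\pi} \int_0^{2\pi} \sqrt{\cos^2(\omega) + \frac{\sin^2(\omega)}{d-1}}\; \mathrm{d}\omega, \] i.e. $\mathsf{Dob}(P) \leq \rho$.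
   Context: $\mathbb{S}^{d-1} = \{x \in \mathbb{R}^d : \|x\| = 1\}$ with $\|\cdot\|$ the Euclidean norm, equipped with its Borel $\sigma$-algebra. For $x \in \mathbb{S}^{d-1}$, $\mathbb{S}^{d-2}_x := \{z \in \mathbb{S}^{d-1} : x^T z = 0\}$ is the great subsphere w.r.t. $x$ and $\sigma^{(x)}_{d-2}$ is its natural surface measure. The kernel $P$ is the transition kernel of geodesic slice sampling on the sphere for a constant target density: from $x$, pick $z$ uniformly on $\mathbb{S}^{d-2}_x$, then pick $\omega$ uniformly on $[0,2\pi)$ and move to $\cos(\omega)x+\sin(\omega)z$. For probability measures $\xi_1,\xi_2$ on $\mathbb{S}^{d-1}$, $\mathcal{W}(\xi_1,\xi_2) := \inf_{\gamma} \int \|v_1 - v_2\|\,\gamma(\mathrm{d}v_1\times \mathrm{d}v_2)$, the infimum over all couplings $\gamma$ of $\xi_1,\xi_2$. The Dobrushin coefficient is $\mathsf{Dob}(P) := \sup_{x \neq y \in \mathbb{S}^{d-1}} \mathcal{W}(P(x,\cdot),P(y,\cdot))/\|x-y\|$, and $P$ is called Wasserstein contractive with rate $\rho$ if $\mathsf{Dob}(P) \leq \rho < 1$. *)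

theory Defs
  imports "HOL-Analysis.Analysis"
begin

text \<open>Ambient space: a Euclidean space 'a of dimension d = DIM('a).\<close>

abbreviation Sph :: "'a::euclidean_space set" where
  "Sph \<equiv> sphere 0 1"

definition sph_space :: "'a::euclidean_space measure" where
  "sph_space = restrict_space borel Sph"

definition subsph :: "'a::euclidean_space \<Rightarrow> 'a set" where
  "subsph x = {z \<in> Sph. inner x z = 0}"

text \<open>Natural surface measure on the (d-2)-sphere subsph x, defined via the cone
  measure: for A in the (d-1)-dimensional hyperplane orthogonal to x,
  sigma(A) = (d-1) * vol_{d-1}{t z : t in [0,1], z in A}, and the (d-1)-volume of the
  cone equals the d-volume of the cylinder obtained by adding s x, s in [0,1].\<close>
definition cyl :: "'a::euclidean_space \<Rightarrow> 'a set \<Rightarrow> 'a set" where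
  "cyl x A = {t *\<^sub>R z + s *\<^sub>R x | t s z. t \<in> {0..1} \<and> s \<in> {0..1} \<and> z \<in> A}"

definition surf :: "'a::euclidean_space \<Rightarrow> 'a measure" where
  "surf x = measure_of (subsph x) (sets (restrict_space borel (subsph x)))
     (\<lambda>A. ennreal (real DIM('a) - 1) * emeasure lebesgue (cyl x A))"

definition GSS :: "'a::euclidean_space \<Rightarrow> 'a measure" where
  "GSS x = measure_of Sph (sets sph_space)
     (\<lambda>A. ennreal (1 / (2 * pi * measure (surf x) (subsph x))) *
       (\<integral>\<^sup>+ z. (\<integral>\<^sup>+ \<omega>. indicator {0..<2*pi} \<omega> *
           indicator A (cos \<omega> *\<^sub>R x + sin \<omega> *\<^sub>R z) \<partial>lborel) \<partial>surf x))"

definition couplings :: "'a::euclidean_space measure \<Rightarrow> 'a measure \<Rightarrow> ('a \<times> 'a) measure set" where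
  "couplings \<mu> \<nu> = {\<gamma>. sets \<gamma> = sets (sph_space \<Otimes>\<^sub>M sph_space) \<and>
      distr \<gamma> sph_space fst = \<mu> \<and> distr \<gamma> sph_space snd = \<nu>}"

definition wass :: "'a::euclidean_space measure \<Rightarrow> 'a measure \<Rightarrow> ennreal" where
  "wass \<mu> \<nu> = (INF \<gamma> \<in> couplings \<mu> \<nu>. \<integral>\<^sup>+ p. ennreal (norm (fst p - snd p)) \<partial>\<gamma>)"

definition Dob :: "('a::euclidean_space \<Rightarrow> 'a measure) \<Rightarrow> ennreal" where
  "Dob P = (SUP (x, y) \<in> {(x, y). x \<in> Sph \<and> y \<in> Sph \<and> x \<noteq> y}.
              wass (P x) (P y) / ennreal (norm (x - y)))"

definition wass_contractive :: "('a::euclidean_space \<Rightarrow> 'a measure) \<Rightarrow> real \<Rightarrow> bool" where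
  "wass_contractive P \<rho> \<longleftrightarrow> Dob P \<le> ennreal \<rho> \<and> \<rho> < 1"

end

theory Submission
  imports Defs
begin

text \<open>
  Couple the kernels at x and y by a rotation: let Q be the rotation in the plane spanned by
  x and y that maps x to y and fixes the orthogonal complement. The surface measure on great
  subspheres is rotation invariant (it is built from Lebesgue measure, which is), so the kernel
  is equivariant: P(Q x, \<cdot>) is the image of P(x, \<cdot>) under Q. Hence V \<mapsto> (V, Q V) with
  V \<sim> P(x, \<cdot>) is a coupling.
  Writing V = cos \<omega> x + sin \<omega> z with z on the great subsphere of x,
  \<parallel>V - Q V\<parallel> = \<parallel>x - y\<parallel> sqrt (cos(\<omega>)^2 + sin(\<omega>)^2 \<langle>z, e\<rangle>^2), where e is the unit vector in
  the plane orthogonal to x. By reflection invariance every unit direction orthogonal to x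
  has the same second moment under z, so \<langle>z, e\<rangle>^2 has mean 1/(d - 1), and Jensen's
  inequality for the square root bounds the average of \<parallel>V - Q V\<parallel> by \<parallel>x - y\<parallel> \<rho>.
  Finally \<rho> < 1 because the integrand is at most 1 - (1 - 1/(d - 1)) sin(\<omega>)^2 / 2.
\<close>

section \<open>Rotation invariance of Lebesgue measure\<close>

lemma nn_integral_translation_invariant:
  fixes N :: "'a::euclidean_space measure" and h :: "'a \<Rightarrow> ennreal"
  assumes translation_invariant: "\<And>t. distr N borel ((+) t) = N" and h: "h \<in> borel_measurable borel"
  shows "(\<integral>\<^sup>+y. h (t + y) \<partial>N) = (\<integral>\<^sup>+y. h y \<partial>N)"
proof -
  have "sets N = sets borel"
    by (metis sets_distr translation_invariant)
  then show ?thesis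
    using h by (subst (2) translation_invariant[symmetric, of t]) (simp add: nn_integral_distr)
qed

lemma emeasure_translation_invariant_mult:
  fixes N :: "'a::euclidean_space measure"
  assumes "sigma_finite_measure N" and translation_invariant: "\<And>t. distr N borel ((+) t) = N"
    and [measurable]: "A \<in> sets borel" "B \<in> sets borel"
  shows "emeasure lborel A * emeasure N B = emeasure N (uminus -` A) * emeasure lborel B"
proof -
  interpret N: sigma_finite_measure N by fact
  interpret pair_sigma_finite lborel N ..
  have [simp, measurable_cong]: "sets N = sets borel"
    by (metis sets_distr translation_invariant)
  note int_N = nn_integral_translation_invariant[OF translation_invariant]
  note int_L = nn_integral_translation_invariant[OF lborel_distr_plus]
  have [measurable]: "uminus -` A \<in> sets borel"
    by (rule measurable_sets_borel[of uminus borel]) simp_all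
  \<comment> \<open>Tonelli for the indicator of {(x, y). x \<in> A \<and> x + y \<in> B}, with the translation
    x \<mapsto> x - y in the inner integral.\<close>
  have "(\<integral>\<^sup>+y. indicator A x * indicator B (x + y) \<partial>N) = indicator A x * emeasure N B" for x
    by (subst nn_integral_cmult, measurable, subst int_N, measurable)
  then have "emeasure lborel A * emeasure N B =
      (\<integral>\<^sup>+x. \<integral>\<^sup>+y. indicator A x * indicator B (x + y) \<partial>N \<partial>lborel)"
    by (simp add: nn_integral_multc)
  also have "\<dots> = (\<integral>\<^sup>+y. \<integral>\<^sup>+x. indicator A x * indicator B (x + y) \<partial>lborel \<partial>N)"
    by (rule Fubini'[symmetric]) measurable
  also have "\<dots> = (\<integral>\<^sup>+y. \<integral>\<^sup>+x. indicator A (x - y) * indicator B x \<partial>lborel \<partial>N)"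
  proof (rule nn_integral_cong)
    fix y
    show "(\<integral>\<^sup>+x. indicator A x * indicator B (x + y) \<partial>lborel) =
        (\<integral>\<^sup>+x. indicator A (x - y) * indicator B x \<partial>lborel)"
      using int_L[of "\<lambda>x. indicator A x * indicator B (x + y)" "- y"] by simp
  qed
  also have "\<dots> = (\<integral>\<^sup>+x. \<integral>\<^sup>+y. indicator A (x - y) * indicator B x \<partial>N \<partial>lborel)"
    by (rule Fubini') measurable
  also have "\<dots> = emeasure N (uminus -` A) * emeasure lborel B"
  proof -
    have "(\<integral>\<^sup>+y. indicator A (x - y) \<partial>N) = (\<integral>\<^sup>+y. indicator (uminus -` A) y \<partial>N)" for x
      using int_N[of "indicator (uminus -` A)" "- x"] by (simp add: indicator_def)
    then show ?thesis
      by (simp add: nn_integral_multc nn_integral_cmult_indicator)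
  qed
  finally show ?thesis .
qed

lemma lborel_eqI_translation_invariant:
  fixes N :: "'a::euclidean_space measure"
  assumes "sigma_finite_measure N" and translation_invariant: "\<And>t. distr N borel ((+) t) = N"
    and unit_ball: "emeasure N (cball 0 1) = emeasure lborel (cball (0::'a) 1)"
  shows "N = lborel"
proof -
  define b where "b = emeasure lborel (cball (0::'a) 1)"
  have b: "b \<noteq> 0" "b \<noteq> \<infinity>"
    using unit_ball_vol_pos[of "real DIM('a)"]
    by (simp_all add: b_def emeasure_cball del: unit_ball_vol_pos)
  have reflected: "emeasure N (uminus -` A) = emeasure lborel A" if "A \<in> sets borel" for A
    using emeasure_translation_invariant_mult[OF assms(1,2) that, of "cball 0 1"] b
      ennreal_mult_cancel_left[of b]
    by (simp add: unit_ball mult.commute top_unique flip: b_def)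
  have "emeasure N A = emeasure lborel A" if [measurable]: "A \<in> sets borel" for A
  proof -
    have "emeasure lborel A = emeasure (distr lborel borel uminus) A"
      using lborel_affine[of "-1" "0::'a"] by (simp add: density_1)
    also have "\<dots> = emeasure N A"
      using reflected[of "uminus -` A"] measurable_sets_borel[of uminus borel A]
      by (simp add: emeasure_distr vimage_comp)
    finally show ?thesis ..
  qed
  moreover have "sets N = sets borel"
    by (metis sets_distr translation_invariant)
  ultimately show ?thesis
    by (intro measure_eqI) simp_all
qed

lemma borel_measurable_orthogonal_transformation:
  "orthogonal_transformation (Q :: 'a::euclidean_space \<Rightarrow> 'a) \<Longrightarrow> Q \<in> borel_measurable borel"
  by (intro borel_measurable_continuous_onI linear_continuous_on)
    (simp add: orthogonal_transformation_linear linear_linear)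

lemma distr_lborel_orthogonal_transformation:
  fixes Q :: "'a::euclidean_space \<Rightarrow> 'a"
  assumes Q: "orthogonal_transformation Q"
  shows "distr lborel borel Q = lborel"
proof (rule lborel_eqI_translation_invariant)
  have [measurable]: "Q \<in> borel_measurable borel"
    using Q by (rule borel_measurable_orthogonal_transformation)
  have vimage_cball: "Q -` cball 0 r = cball 0 r" for r
    using orthogonal_transformation_norm[OF Q] by auto
  show "emeasure (distr lborel borel Q) (cball 0 1) = emeasure lborel (cball (0::'a) 1)"
    by (simp add: emeasure_distr vimage_cball)
  show "sigma_finite_measure (distr lborel borel Q)"
  proof (rule sigma_finite_measure.intro, intro exI conjI)
    show "range (\<lambda>n::nat. cball (0::'a) n) \<subseteq> sets (distr lborel borel Q)"
      "countable (range (\<lambda>n::nat. cball (0::'a) n))"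
      by auto
    show "\<Union> (range (\<lambda>n::nat. cball (0::'a) n)) = space (distr lborel borel Q)"
      by (auto intro: real_arch_simple)
    show "\<forall>A\<in>range (\<lambda>n::nat. cball (0::'a) n). emeasure (distr lborel borel Q) A \<noteq> \<infinity>"
      by (auto simp: emeasure_distr vimage_cball emeasure_cball)
  qed
  fix t :: 'a
  obtain s where "Q s = t"
    using orthogonal_transformation_surj[OF Q] by (metis surj_def)
  then have "(+) t \<circ> Q = Q \<circ> (+) s"
    using orthogonal_transformation_linear[OF Q] by (auto simp: linear_add)
  then have "distr (distr lborel borel Q) borel ((+) t) = distr (distr lborel borel ((+) s)) borel Q"
    by (simp add: distr_distr)
  then show "distr (distr lborel borel Q) borel ((+) t) = distr lborel borel Q"
    by (simp add: lborel_distr_plus)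
qed

lemma
  fixes Q :: "'a::euclidean_space \<Rightarrow> 'a"
  assumes Q: "orthogonal_transformation Q"
  shows lebesgue_measurable_orthogonal_transformation: "Q \<in> lebesgue \<rightarrow>\<^sub>M lebesgue"
    and distr_lebesgue_orthogonal_transformation: "distr lebesgue lebesgue Q = lebesgue"
proof -
  have [measurable]: "Q \<in> borel_measurable borel"
    using Q by (rule borel_measurable_orthogonal_transformation)
  have "distr lebesgue lborel Q = distr lborel borel Q"
    by (subst distr_completion) (auto intro: distr_cong)
  then have distr_Q: "distr lebesgue lborel Q = lborel"
    by (simp add: distr_lborel_orthogonal_transformation[OF Q])
  then show "Q \<in> lebesgue \<rightarrow>\<^sub>M lebesgue"
    by (simp add: completion.measurable_completion2 measurable_completion)
  have "distr lebesgue lebesgue Q = completion (distr lebesgue lborel Q)"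
    by (subst completion.completion_distr_eq) (auto simp: distr_Q measurable_completion)
  then show "distr lebesgue lebesgue Q = lebesgue"
    by (simp add: distr_Q)
qed

lemma emeasure_lebesgue_vimage_orthogonal_transformation:
  fixes Q :: "'a::euclidean_space \<Rightarrow> 'a"
  assumes Q: "orthogonal_transformation Q"
  shows "emeasure lebesgue (Q -` S) = emeasure lebesgue S"
proof (cases "S \<in> sets lebesgue")
  case True
  then show ?thesis
    using lebesgue_measurable_orthogonal_transformation[OF Q]
    by (subst (2) distr_lebesgue_orthogonal_transformation[OF Q, symmetric]) (simp add: emeasure_distr)
next
  case False
  have "inv Q -` (Q -` S) = S"
    using orthogonal_transformation_surj[OF Q] by (auto simp: surj_f_inv_f)
  then have "Q -` S \<notin> sets lebesgue"
    using False measurable_sets[OF lebesgue_measurable_orthogonal_transformation[OF orthogonal_transformation_inv[OF Q]]]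
    by fastforce
  then show ?thesis
    using False by (simp add: emeasure_notin_sets)
qed

section \<open>Rotation invariance of the surface measure\<close>

lemma orthogonal_transformation_vimage_subsph:
  fixes Q :: "'a::euclidean_space \<Rightarrow> 'a"
  assumes "orthogonal_transformation Q"
  shows "Q -` subsph (Q x) = subsph x"
  using assms by (auto simp: subsph_def orthogonal_transformation_norm orthogonal_transformation_def)

lemma orthogonal_transformation_vimage_cyl:
  fixes Q :: "'a::euclidean_space \<Rightarrow> 'a"
  assumes Q: "orthogonal_transformation Q"
  shows "Q -` cyl (Q x) B = cyl x (Q -` B)"
proof -
  have lin: "linear Q"
    using Q by (rule orthogonal_transformation_linear)
  have Q_inv: "Q (inv Q b) = b" for b
    using orthogonal_transformation_surj[OF Q] by (simp add: surj_f_inv_f)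
  have "w \<in> cyl x (Q -` B)" if "Q w = t *\<^sub>R b + s *\<^sub>R Q x" "t \<in> {0..1}" "s \<in> {0..1}" "b \<in> B"
    for w t s b
  proof -
    have "Q w = Q (t *\<^sub>R inv Q b + s *\<^sub>R x)"
      using that(1) lin by (simp add: linear_add linear_scale Q_inv)
    then have "w = t *\<^sub>R inv Q b + s *\<^sub>R x"
      using orthogonal_transformation_inj[OF Q] by (meson injD)
    then show ?thesis
      using that Q_inv unfolding cyl_def by force
  qed
  moreover have "Q (t *\<^sub>R z + s *\<^sub>R x) = t *\<^sub>R Q z + s *\<^sub>R Q x" for t s z
    using lin by (simp add: linear_add linear_scale)
  ultimately show ?thesis
    unfolding cyl_def by fastforce
qed

definition cone_measure :: "'a::euclidean_space \<Rightarrow> 'a set \<Rightarrow> ennreal" where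
  "cone_measure x A = ennreal (real DIM('a) - 1) * emeasure lebesgue (cyl x A)"

lemma surf_eq_measure_of:
  "surf x = measure_of (subsph x) (sets (restrict_space borel (subsph x))) (cone_measure x)"
  by (simp add: surf_def cone_measure_def[abs_def])

lemma sets_restrict_subsph_subset: "sets (restrict_space borel (subsph x)) \<subseteq> Pow (subsph x)"
  using sets.space_closed[of "restrict_space borel (subsph x)"] by (simp add: space_restrict_space)

lemma sigma_sets_restrict_subsph:
  "sigma_sets (subsph x) (sets (restrict_space borel (subsph x))) = sets (restrict_space borel (subsph x))"
  using sets.sigma_sets_eq[of "restrict_space borel (subsph x)"] by (simp add: space_restrict_space)

lemma space_surf [simp]: "space (surf x) = subsph x"
  unfolding surf_eq_measure_of by (rule space_measure_of[OF sets_restrict_subsph_subset])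

lemma sets_surf: "sets (surf x) = sets (restrict_space borel (subsph x))"
  unfolding surf_eq_measure_of
  by (simp add: sets_restrict_subsph_subset sigma_sets_restrict_subsph)

lemma emeasure_surf:
  "emeasure (surf x) B =
    (if B \<in> sets (surf x) \<and> measure_space (subsph x) (sets (surf x)) (cone_measure x)
     then cone_measure x B else 0)"
  unfolding sets_surf unfolding surf_eq_measure_of emeasure_measure_of_conv
  by (simp add: sigma_sets_restrict_subsph)

lemma borel_measurable_surf:
  "f \<in> borel_measurable borel \<Longrightarrow> f \<in> borel_measurable (surf x)"
  using measurable_restrict_space1 by (subst measurable_cong_sets[OF sets_surf refl]) blast

lemma cone_measure_vimage_orthogonal_transformation:
  fixes Q :: "'a::euclidean_space \<Rightarrow> 'a"
  assumes "orthogonal_transformation Q"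
  shows "cone_measure x (Q -` B) = cone_measure (Q x) B"
  using assms
  by (simp add: cone_measure_def emeasure_lebesgue_vimage_orthogonal_transformation
      orthogonal_transformation_vimage_cyl[symmetric])

lemma measurable_surf_orthogonal_transformation:
  fixes Q :: "'a::euclidean_space \<Rightarrow> 'a"
  assumes Q: "orthogonal_transformation Q"
  shows "Q \<in> surf x \<rightarrow>\<^sub>M surf (Q x)"
proof -
  have "Q \<in> restrict_space borel (subsph x) \<rightarrow>\<^sub>M restrict_space borel (subsph (Q x))"
    using Q orthogonal_transformation_vimage_subsph[OF Q, of x]
    by (intro measurable_restrict_space2 measurable_restrict_space1
        borel_measurable_orthogonal_transformation) (auto simp: space_restrict_space)
  then show ?thesis
    by (simp add: measurable_def sets_surf space_restrict_space)
qed

lemma emeasure_surf_vimage_orthogonal_transformation: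
  fixes Q :: "'a::euclidean_space \<Rightarrow> 'a"
  assumes Q: "orthogonal_transformation Q" and B: "B \<in> sets (surf (Q x))"
    and "measure_space (subsph x) (sets (surf x)) (cone_measure x)"
  shows "emeasure (distr (surf x) (surf (Q x)) Q) B = cone_measure (Q x) B"
proof -
  have "Q -` B \<inter> space (surf x) = Q -` B"
    using B sets.sets_into_space orthogonal_transformation_vimage_subsph[OF Q, of x] by fastforce
  moreover have "Q -` B \<inter> space (surf x) \<in> sets (surf x)"
    using B measurable_surf_orthogonal_transformation[OF Q] by (rule measurable_sets[rotated])
  ultimately show ?thesis
    using assms measurable_surf_orthogonal_transformation[OF Q]
    by (simp add: emeasure_distr emeasure_surf cone_measure_vimage_orthogonal_transformation)
qed

lemma measure_space_cone_measure_orthogonal_transformation: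
  fixes Q :: "'a::euclidean_space \<Rightarrow> 'a"
  assumes Q: "orthogonal_transformation Q"
    and "measure_space (subsph x) (sets (surf x)) (cone_measure x)"
  shows "measure_space (subsph (Q x)) (sets (surf (Q x))) (cone_measure (Q x))"
proof -
  let ?D = "distr (surf x) (surf (Q x)) Q"
  have "measure_space (subsph (Q x)) (sets (surf (Q x))) (emeasure ?D)"
    using measure_space[of ?D] by simp
  moreover have "sigma_sets (subsph (Q x)) (sets (surf (Q x))) = sets (surf (Q x))"
    using sets.sigma_sets_eq[of "surf (Q x)"] by simp
  ultimately show ?thesis
    using measure_space_eq[of "sets (surf (Q x))" "subsph (Q x)" "emeasure ?D" "cone_measure (Q x)"]
      emeasure_surf_vimage_orthogonal_transformation[OF Q _ assms(2)] sets.space_closed[of "surf (Q x)"]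
    by simp
qed

lemma distr_surf_orthogonal_transformation:
  fixes Q :: "'a::euclidean_space \<Rightarrow> 'a"
  assumes Q: "orthogonal_transformation Q"
  shows "distr (surf x) (surf (Q x)) Q = surf (Q x)"
proof (rule measure_eqI)
  fix B assume B: "B \<in> sets (distr (surf x) (surf (Q x)) Q)"
  have Q_inv: "orthogonal_transformation (inv Q)" "inv Q (Q x) = x"
    using Q by (simp_all add: orthogonal_transformation_inv orthogonal_transformation_inj)
  show "emeasure (distr (surf x) (surf (Q x)) Q) B = emeasure (surf (Q x)) B"
  proof (cases "measure_space (subsph x) (sets (surf x)) (cone_measure x)")
    case True
    then show ?thesis
      using B emeasure_surf_vimage_orthogonal_transformation[OF Q _ True]
        measure_space_cone_measure_orthogonal_transformation[OF Q True]
      by (simp add: emeasure_surf[of "Q x"])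
  next
    case False
    \<comment> \<open>Then both measure_of constructions degenerate to the null measure.\<close>
    then have "\<not> measure_space (subsph (Q x)) (sets (surf (Q x))) (cone_measure (Q x))"
      using measure_space_cone_measure_orthogonal_transformation[OF Q_inv(1), of "Q x"] Q_inv(2)
      by auto
    moreover have "Q -` B \<inter> subsph x \<in> sets (surf x)"
      using B measurable_sets[OF measurable_surf_orthogonal_transformation[OF Q]] by simp
    ultimately show ?thesis
      using B False measurable_surf_orthogonal_transformation[OF Q]
      by (simp add: emeasure_distr emeasure_surf[of x] emeasure_surf[of "Q x"])
  qed
qed simp

section \<open>Second moments of the surface measure\<close>

definition reflection :: "'a::real_inner \<Rightarrow> 'a \<Rightarrow> 'a" where
  "reflection e w = w - (2 * (w \<bullet> e) / (e \<bullet> e)) *\<^sub>R e"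

lemma linear_reflection: "linear (reflection e)"
  by (rule linearI) (simp_all add: reflection_def inner_add_left algebra_simps add_divide_distrib)

lemma inner_reflection: "reflection e v \<bullet> reflection e w = v \<bullet> w"
  by (cases "e = 0")
    (simp_all add: reflection_def inner_diff_left inner_diff_right inner_commute field_simps)

lemma orthogonal_transformation_reflection: "orthogonal_transformation (reflection e)"
  by (simp add: orthogonal_transformation_def linear_reflection inner_reflection)

lemma reflection_adjoint: "reflection e v \<bullet> w = v \<bullet> reflection e w"
  by (simp add: reflection_def inner_diff_left inner_diff_right inner_commute algebra_simps)

lemma reflection_orthogonal: "x \<bullet> e = 0 \<Longrightarrow> reflection e x = x"
  by (simp add: reflection_def)

lemma reflection_self: "reflection x x = - x"
  by (cases "x = 0") (simp_all add: reflection_def scaleR_2 algebra_simps)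

lemma reflection_diff_unit:
  assumes "norm u = 1" "norm v = 1"
  shows "reflection (u - v) u = v"
proof (cases "u = v")
  case False
  have "u \<bullet> u = 1" "v \<bullet> v = 1"
    using assms by (simp_all add: dot_square_norm)
  then have "(u - v) \<bullet> (u - v) = 2 * (u \<bullet> (u - v))"
    by (simp add: inner_diff_left inner_diff_right inner_commute)
  moreover have "(u - v) \<bullet> (u - v) \<noteq> 0"
    using False by simp
  ultimately show ?thesis
    by (simp add: reflection_def)
qed (simp add: reflection_def)

lemma integral_surf_orthogonal_transformation:
  fixes Q :: "'a::euclidean_space \<Rightarrow> 'a" and f :: "'a \<Rightarrow> real"
  assumes Q: "orthogonal_transformation Q" and Qx: "Q x = x" and f: "f \<in> borel_measurable borel"
  shows "(\<integral>z. f (Q z) \<partial>surf x) = (\<integral>z. f z \<partial>surf x)"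
proof -
  have "(\<integral>z. f (Q z) \<partial>surf x) = (\<integral>z. f z \<partial>distr (surf x) (surf (Q x)) Q)"
    by (rule integral_distr[symmetric])
      (simp_all add: measurable_surf_orthogonal_transformation[OF Q] borel_measurable_surf[OF f])
  then show ?thesis
    using distr_surf_orthogonal_transformation[OF Q, of x] by (simp add: Qx)
qed

lemma integral_surf_inner_square_unit:
  fixes x u v :: "'a::euclidean_space"
  assumes "norm u = 1" "norm v = 1" "u \<bullet> x = 0" "v \<bullet> x = 0"
  shows "(\<integral>z. (z \<bullet> u)\<^sup>2 \<partial>surf x) = (\<integral>z. (z \<bullet> v)\<^sup>2 \<partial>surf x)"
proof -
  have "reflection (u - v) x = x"
    using assms by (intro reflection_orthogonal) (simp add: inner_diff_right inner_commute)
  then have "(\<integral>z. (reflection (u - v) z \<bullet> u)\<^sup>2 \<partial>surf x) = (\<integral>z. (z \<bullet> u)\<^sup>2 \<partial>surf x)"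
    by (intro integral_surf_orthogonal_transformation orthogonal_transformation_reflection) simp_all
  then show ?thesis
    by (simp add: reflection_adjoint reflection_diff_unit assms)
qed

lemma integral_surf_inner_square_eq:
  fixes x v e :: "'a::euclidean_space"
  assumes x: "norm x = 1" and e: "norm e = 1" "e \<bullet> x = 0"
  shows "(\<integral>z. (z \<bullet> v)\<^sup>2 \<partial>surf x) = ((norm v)\<^sup>2 - (v \<bullet> x)\<^sup>2) * (\<integral>z. (z \<bullet> e)\<^sup>2 \<partial>surf x)"
proof -
  define w where "w = v - (v \<bullet> x) *\<^sub>R x"
  have xx: "x \<bullet> x = 1"
    using x by (simp add: dot_square_norm)
  have w: "w \<bullet> x = 0" "(norm w)\<^sup>2 = (norm v)\<^sup>2 - (v \<bullet> x)\<^sup>2"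
    unfolding power2_norm_eq_inner using xx
    by (simp_all add: w_def inner_diff_left inner_diff_right inner_commute power2_eq_square)
  have "(\<integral>z. (z \<bullet> v)\<^sup>2 \<partial>surf x) = (\<integral>z. (norm w)\<^sup>2 * (z \<bullet> sgn w)\<^sup>2 \<partial>surf x)"
  proof (rule Bochner_Integration.integral_cong[OF refl])
    fix z assume "z \<in> space (surf x)"
    then have "z \<bullet> w = z \<bullet> v"
      by (simp add: subsph_def w_def inner_diff_right inner_commute)
    then show "(z \<bullet> v)\<^sup>2 = (norm w)\<^sup>2 * (z \<bullet> sgn w)\<^sup>2"
      by (cases "w = 0") (simp_all add: sgn_div_norm power_mult_distrib field_simps)
  qed
  also have "\<dots> = (norm w)\<^sup>2 * (\<integral>z. (z \<bullet> e)\<^sup>2 \<partial>surf x)"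
  proof (cases "w = 0")
    case False
    then have "norm (sgn w) = 1" "sgn w \<bullet> x = 0"
      using w by (simp_all add: norm_sgn sgn_div_norm)
    then show ?thesis
      using e by (simp add: integral_surf_inner_square_unit[of "sgn w" e])
  qed simp
  finally show ?thesis
    by (simp add: w)
qed

lemma sum_Basis_inner_square: "(\<Sum>b\<in>Basis. (z \<bullet> b)\<^sup>2) = (norm z)\<^sup>2"
  unfolding power2_norm_eq_inner by (subst euclidean_inner) (simp add: power2_eq_square)

lemma integrable_surf_inner_square:
  assumes "finite_measure (surf x)"
  shows "integrable (surf x) (\<lambda>z. (z \<bullet> v)\<^sup>2)"
proof (rule finite_measure.integrable_const_bound[OF assms])
  show "AE z in surf x. norm ((z \<bullet> v)\<^sup>2) \<le> (norm v)\<^sup>2"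
  proof (rule AE_I2)
    fix z assume "z \<in> space (surf x)"
    then have "\<bar>z \<bullet> v\<bar> \<le> norm v"
      using Cauchy_Schwarz_ineq2[of z v] by (simp add: subsph_def)
    then have "\<bar>z \<bullet> v\<bar>\<^sup>2 \<le> (norm v)\<^sup>2"
      by (rule power_mono[OF _ abs_ge_zero])
    then show "norm ((z \<bullet> v)\<^sup>2) \<le> (norm v)\<^sup>2"
      by simp
  qed
qed (intro borel_measurable_surf, simp)

lemma integral_surf_inner_square:
  fixes x v :: "'a::euclidean_space"
  assumes x: "norm x = 1" and dim: "DIM('a) \<ge> 2" and fin: "finite_measure (surf x)"
  shows "(\<integral>z. (z \<bullet> v)\<^sup>2 \<partial>surf x) =
    ((norm v)\<^sup>2 - (v \<bullet> x)\<^sup>2) * measure (surf x) (subsph x) / (real DIM('a) - 1)"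
proof -
  obtain e where e: "norm e = 1" "e \<bullet> x = 0"
  proof -
    obtain w where "w \<noteq> 0" "orthogonal x w"
      using orthogonal_to_vector_exists[OF dim] by blast
    then show thesis
      by (intro that[of "sgn w"]) (simp_all add: norm_sgn orthogonal_def sgn_div_norm inner_commute)
  qed
  define K where "K = (\<integral>z. (z \<bullet> e)\<^sup>2 \<partial>surf x)"
  have "measure (surf x) (subsph x) = (\<integral>z. 1 \<partial>surf x)"
    by simp
  also have "\<dots> = (\<integral>z. (\<Sum>b\<in>Basis. (z \<bullet> b)\<^sup>2) \<partial>surf x)"
    by (rule Bochner_Integration.integral_cong[OF refl]) (simp add: sum_Basis_inner_square subsph_def)
  also have "\<dots> = (\<Sum>b\<in>Basis. (1 - (x \<bullet> b)\<^sup>2) * K)"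
    using integrable_surf_inner_square[OF fin] integral_surf_inner_square_eq[OF x e]
    by (simp add: K_def inner_commute)
  also have "\<dots> = (real DIM('a) - 1) * K"
    using sum_Basis_inner_square[of x] x by (simp add: sum_distrib_right[symmetric] sum_subtractf)
  finally show ?thesis
    using dim integral_surf_inner_square_eq[OF x e, of v] by (simp add: K_def)
qed

section \<open>The rotation taking x to y\<close>

definition plane_rotation :: "'a::real_inner \<Rightarrow> 'a \<Rightarrow> 'a \<Rightarrow> 'a" where
  "plane_rotation x y = reflection (x + y) \<circ> reflection x"

lemma orthogonal_transformation_plane_rotation: "orthogonal_transformation (plane_rotation x y)"
  unfolding plane_rotation_def
  by (intro orthogonal_transformation_compose orthogonal_transformation_reflection)

lemma plane_rotation_apply_self:
  assumes "norm x = 1" "norm y = 1"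
  shows "plane_rotation x y x = y"
proof (cases "x + y = 0")
  case True
  then show ?thesis
    by (simp add: plane_rotation_def reflection_self reflection_def add_eq_0_iff)
next
  case False
  have "x \<bullet> x = 1" "y \<bullet> y = 1"
    using assms by (simp_all add: dot_square_norm)
  then have "(x + y) \<bullet> (x + y) = 2 * (x \<bullet> (x + y))"
    by (simp add: inner_add_left inner_add_right inner_commute)
  moreover have "(x + y) \<bullet> (x + y) \<noteq> 0"
    using False by simp
  ultimately have coeff: "2 * (x \<bullet> (x + y)) / ((x + y) \<bullet> (x + y)) = 1"
    by (metis divide_self)
  have "reflection (x + y) (- x) = - x + (2 * (x \<bullet> (x + y)) / ((x + y) \<bullet> (x + y))) *\<^sub>R (x + y)"
    by (simp add: reflection_def inner_minus_left)
  then show ?thesis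
    unfolding coeff by (simp add: plane_rotation_def reflection_self)
qed

lemma diff_plane_rotation:
  fixes x y z :: "'a::real_inner"
  assumes xx: "x \<bullet> x = 1" and yy: "y \<bullet> y = 1" and zx: "z \<bullet> x = 0" and xy: "x \<bullet> y \<noteq> -1"
  shows "(c *\<^sub>R x + s *\<^sub>R z) - plane_rotation x y (c *\<^sub>R x + s *\<^sub>R z) =
    c *\<^sub>R (x - y) + (s * (z \<bullet> y) / (1 + x \<bullet> y)) *\<^sub>R (x + y)"
proof -
  have reflect_x: "reflection x (c *\<^sub>R x + s *\<^sub>R z) = - c *\<^sub>R x + s *\<^sub>R z"
    using xx zx by (simp add: reflection_def inner_add_left algebra_simps flip: scaleR_2)
  have "1 + x \<bullet> y \<noteq> 0"
    using xy by (auto simp: add_eq_0_iff)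
  moreover have norm_sum: "(x + y) \<bullet> (x + y) = 2 * (1 + x \<bullet> y)"
    using xx yy by (simp add: inner_add_left inner_add_right inner_commute)
  moreover have inner_sum: "(- c *\<^sub>R x + s *\<^sub>R z) \<bullet> (x + y) = - c * (1 + x \<bullet> y) + s * (z \<bullet> y)"
    using xx zx by (simp add: inner_add_left inner_add_right inner_commute algebra_simps)
  ultimately have "2 * ((- c *\<^sub>R x + s *\<^sub>R z) \<bullet> (x + y)) / ((x + y) \<bullet> (x + y)) =
      - c + s * (z \<bullet> y) / (1 + x \<bullet> y)"
    unfolding inner_sum norm_sum by (simp add: field_simps)
  then have "plane_rotation x y (c *\<^sub>R x + s *\<^sub>R z) =
      (- c *\<^sub>R x + s *\<^sub>R z) - (- c + s * (z \<bullet> y) / (1 + x \<bullet> y)) *\<^sub>R (x + y)"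
    by (simp add: plane_rotation_def reflect_x reflection_def[of "x + y"])
  then show ?thesis
    by (simp add: algebra_simps)
qed

lemma diff_plane_rotation_antipodal:
  fixes x z :: "'a::real_inner"
  assumes "norm x = 1" and "z \<bullet> x = 0"
  shows "(c *\<^sub>R x + s *\<^sub>R z) - plane_rotation x (- x) (c *\<^sub>R x + s *\<^sub>R z) = (2 * c) *\<^sub>R x"
  using assms
  by (simp add: plane_rotation_def reflection_def inner_add_left dot_square_norm algebra_simps
      flip: scaleR_2)

\<comment> \<open>For y = - x both z \<bullet> y and 1 - (x \<bullet> y)^2 vanish, and the quotient is 0 / 0 = 0.\<close>
lemma norm_diff_plane_rotation_power2:
  fixes x y z :: "'a::real_inner"
  assumes x: "norm x = 1" and y: "norm y = 1" and zx: "z \<bullet> x = 0" and "x \<noteq> y"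
  shows "(norm ((c *\<^sub>R x + s *\<^sub>R z) - plane_rotation x y (c *\<^sub>R x + s *\<^sub>R z)))\<^sup>2 =
    (norm (x - y))\<^sup>2 * (c\<^sup>2 + s\<^sup>2 * (z \<bullet> y)\<^sup>2 / (1 - (x \<bullet> y)\<^sup>2))"
proof -
  define t where "t = x \<bullet> y"
  have xx: "x \<bullet> x = 1" "y \<bullet> y = 1"
    using x y by (simp_all add: dot_square_norm)
  have norm_diff: "(norm (x - y))\<^sup>2 = 2 - 2 * t"
    unfolding power2_norm_eq_inner t_def using xx
    by (simp add: inner_diff_left inner_diff_right inner_commute)
  show ?thesis
  proof (cases "t = -1")
    case True
    then have "(norm (x + y))\<^sup>2 = 0"
      unfolding power2_norm_eq_inner using xx
      by (simp add: inner_add_left inner_add_right inner_commute t_def)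
    then have "y = - x"
      by (simp add: add_eq_0_iff)
    then show ?thesis
      using diff_plane_rotation_antipodal[OF x zx] True x
      by (simp add: t_def power_mult_distrib flip: scaleR_2)
  next
    case False
    have "\<bar>t\<bar> \<le> 1"
      using Cauchy_Schwarz_ineq2[of x y] x y by (simp add: t_def)
    moreover have "t \<noteq> 1"
      using norm_diff \<open>x \<noteq> y\<close> by auto
    ultimately have "1 + t \<noteq> 0" "1 - t \<noteq> 0"
      using False by auto
    define k where "k = s * (z \<bullet> y) / (1 + t)"
    have "(norm (c *\<^sub>R (x - y) + k *\<^sub>R (x + y)))\<^sup>2 = c\<^sup>2 * (2 - 2 * t) + k\<^sup>2 * (2 + 2 * t)"
      unfolding power2_norm_eq_inner using xx
      by (simp add: inner_add_left inner_add_right inner_diff_left inner_diff_right inner_commute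
          t_def algebra_simps power2_eq_square)
    also have "\<dots> = (2 - 2 * t) * (c\<^sup>2 + (s * (z \<bullet> y))\<^sup>2 / (1 - t\<^sup>2))"
      using \<open>1 + t \<noteq> 0\<close> \<open>1 - t \<noteq> 0\<close> unfolding k_def
      by (simp add: power2_eq_square divide_simps) (auto simp: algebra_simps square_eq_1_iff)
    finally show ?thesis
      using diff_plane_rotation[OF xx(1) xx(2) zx] False
      by (simp add: k_def t_def norm_diff power_mult_distrib)
  qed
qed

lemma norm_diff_plane_rotation:
  fixes x y z :: "'a::real_inner"
  assumes "norm x = 1" and "norm y = 1" and "z \<bullet> x = 0" and "x \<noteq> y"
  shows "norm ((c *\<^sub>R x + s *\<^sub>R z) - plane_rotation x y (c *\<^sub>R x + s *\<^sub>R z)) =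
    norm (x - y) * sqrt (c\<^sup>2 + s\<^sup>2 * (z \<bullet> y)\<^sup>2 / (1 - (x \<bullet> y)\<^sup>2))"
  using arg_cong[OF norm_diff_plane_rotation_power2[OF assms, of c s], of sqrt]
  by (simp add: real_sqrt_mult)

section \<open>The kernel as an image measure\<close>

definition great_circle :: "'a::real_vector \<Rightarrow> 'a \<Rightarrow> real \<Rightarrow> 'a" where
  "great_circle x z \<omega> = cos \<omega> *\<^sub>R x + sin \<omega> *\<^sub>R z"

definition gss_const :: "'a::euclidean_space \<Rightarrow> real" where
  "gss_const x = 1 / (2 * pi * measure (surf x) (subsph x))"

definition slice_measure :: "'a::euclidean_space \<Rightarrow> ('a \<times> real) measure" where
  "slice_measure x =
    density (surf x \<Otimes>\<^sub>M lborel) (\<lambda>p. ennreal (gss_const x) * indicator {0..<2*pi} (snd p))"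

lemma space_sph_space [simp]: "space sph_space = Sph"
  by (simp add: sph_space_def space_restrict_space)

lemma borel_measurable_sph_space: "(\<lambda>v. v) \<in> sph_space \<rightarrow>\<^sub>M borel"
  unfolding sph_space_def by (rule measurable_restrict_space1) simp

lemma linear_great_circle: "linear Q \<Longrightarrow> Q (great_circle x z \<omega>) = great_circle (Q x) (Q z) \<omega>"
  by (simp add: great_circle_def linear_add linear_scale)

lemma norm_great_circle:
  assumes "norm x = 1" "z \<in> subsph x"
  shows "norm (great_circle x z \<omega>) = 1"
proof -
  have "x \<bullet> x = 1" "z \<bullet> z = 1" "x \<bullet> z = 0"
    using assms by (simp_all add: subsph_def dot_square_norm)
  then show ?thesis
    by (simp add: norm_eq_1 great_circle_def inner_add_left inner_add_right inner_commute
        flip: power2_eq_square)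
qed

lemma measurable_great_circle:
  fixes x :: "'a::euclidean_space"
  assumes "norm x = 1"
  shows "(\<lambda>p. great_circle x (fst p) (snd p)) \<in> surf x \<Otimes>\<^sub>M lborel \<rightarrow>\<^sub>M sph_space"
  unfolding sph_space_def
proof (rule measurable_restrict_space2)
  have [measurable]: "fst \<in> surf x \<Otimes>\<^sub>M lborel \<rightarrow>\<^sub>M borel"
    using measurable_fst by (rule measurable_compose) (intro borel_measurable_surf, simp)
  show "(\<lambda>p. great_circle x (fst p) (snd p)) \<in> borel_measurable (surf x \<Otimes>\<^sub>M lborel)"
    unfolding great_circle_def by measurable
  show "(\<lambda>p. great_circle x (fst p) (snd p)) \<in> space (surf x \<Otimes>\<^sub>M lborel) \<rightarrow> Sph"
    using norm_great_circle[OF assms] by (auto simp: space_pair_measure)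
qed

lemma GSS_eqI:
  fixes x :: "'a::euclidean_space"
  assumes sets_D: "sets D = sets sph_space"
    and emeasure_D: "\<And>A. A \<in> sets sph_space \<Longrightarrow> emeasure D A = ennreal (gss_const x) *
      (\<integral>\<^sup>+z. \<integral>\<^sup>+\<omega>. indicator {0..<2*pi} \<omega> * indicator A (great_circle x z \<omega>) \<partial>lborel \<partial>surf x)"
  shows "GSS x = D"
proof -
  have "GSS x = measure_of Sph (sets sph_space) (emeasure D)"
    unfolding GSS_def using sets.space_closed[of sph_space] sets.sigma_sets_eq[of sph_space]
    by (intro measure_of_eq) (auto simp: emeasure_D gss_const_def great_circle_def)
  also have "\<dots> = D"
    using sets_eq_imp_space_eq[OF sets_D] measure_of_of_measure[of D] by (simp flip: sets_D)
  finally show ?thesis .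
qed

lemma sets_slice_measure [simp, measurable_cong]: "sets (slice_measure x) = sets (surf x \<Otimes>\<^sub>M lborel)"
  by (simp add: slice_measure_def)

lemma nn_integral_slice_measure:
  fixes f :: "'a::euclidean_space \<times> real \<Rightarrow> ennreal"
  assumes f: "f \<in> borel_measurable (surf x \<Otimes>\<^sub>M lborel)"
  shows "(\<integral>\<^sup>+p. f p \<partial>slice_measure x) =
    ennreal (gss_const x) * (\<integral>\<^sup>+z. \<integral>\<^sup>+\<omega>. indicator {0..<2*pi} \<omega> * f (z, \<omega>) \<partial>lborel \<partial>surf x)"
proof -
  have [measurable]: "snd \<in> surf x \<Otimes>\<^sub>M lborel \<rightarrow>\<^sub>M borel"
    by measurable
  have "(\<integral>\<^sup>+p. f p \<partial>slice_measure x) =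
      ennreal (gss_const x) * (\<integral>\<^sup>+p. indicator {0..<2*pi} (snd p) * f p \<partial>(surf x \<Otimes>\<^sub>M lborel))"
    unfolding slice_measure_def using f
    by (simp add: nn_integral_density nn_integral_cmult mult.assoc)
  also have "(\<integral>\<^sup>+p. indicator {0..<2*pi} (snd p) * f p \<partial>(surf x \<Otimes>\<^sub>M lborel)) =
      (\<integral>\<^sup>+z. \<integral>\<^sup>+\<omega>. indicator {0..<2*pi} \<omega> * f (z, \<omega>) \<partial>lborel \<partial>surf x)"
    using f by (subst lborel.nn_integral_fst[symmetric]) simp_all
  finally show ?thesis .
qed

lemma measure_surf_orthogonal_transformation:
  fixes Q :: "'a::euclidean_space \<Rightarrow> 'a"
  assumes Q: "orthogonal_transformation Q"
  shows "measure (surf (Q x)) (subsph (Q x)) = measure (surf x) (subsph x)"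
  using measurable_surf_orthogonal_transformation[OF Q, of x] sets.top[of "surf (Q x)"]
  by (subst distr_surf_orthogonal_transformation[OF Q, symmetric])
    (simp add: measure_distr orthogonal_transformation_vimage_subsph[OF Q])

lemma GSS_eq_distr_slice_measure:
  fixes x :: "'a::euclidean_space" and Q :: "'a \<Rightarrow> 'a"
  assumes x: "norm x = 1" and Q: "orthogonal_transformation Q"
  shows "GSS (Q x) = distr (slice_measure x) sph_space (\<lambda>p. Q (great_circle x (fst p) (snd p)))"
proof (rule GSS_eqI)
  have Qx: "norm (Q x) = 1"
    using x Q by (simp add: orthogonal_transformation_norm)
  have great_circle_Qx [measurable]:
    "(\<lambda>p. great_circle (Q x) (fst p) (snd p)) \<in> surf (Q x) \<Otimes>\<^sub>M lborel \<rightarrow>\<^sub>M sph_space"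
    using Qx by (rule measurable_great_circle)
  have [measurable]: "Q \<in> surf x \<rightarrow>\<^sub>M surf (Q x)"
    using Q by (rule measurable_surf_orthogonal_transformation)
  have "(\<lambda>p. great_circle (Q x) (Q (fst p)) (snd p)) \<in> surf x \<Otimes>\<^sub>M lborel \<rightarrow>\<^sub>M sph_space"
    using measurable_compose[OF _ great_circle_Qx, of "\<lambda>p. (Q (fst p), snd p)"] by simp
  then have rotated [measurable]:
    "(\<lambda>p. Q (great_circle x (fst p) (snd p))) \<in> surf x \<Otimes>\<^sub>M lborel \<rightarrow>\<^sub>M sph_space"
    using Q by (simp add: linear_great_circle orthogonal_transformation_linear)
  show "sets (distr (slice_measure x) sph_space (\<lambda>p. Q (great_circle x (fst p) (snd p)))) = sets sph_space"
    by simp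
  fix A :: "'a set" assume A [measurable]: "A \<in> sets sph_space"
  define F where
    "F z = (\<integral>\<^sup>+\<omega>. indicator {0..<2*pi} \<omega> * indicator A (great_circle (Q x) z \<omega>) \<partial>lborel)" for z
  have [measurable]: "F \<in> borel_measurable (surf (Q x))"
    unfolding F_def by measurable
  have "emeasure (distr (slice_measure x) sph_space (\<lambda>p. Q (great_circle x (fst p) (snd p)))) A =
      (\<integral>\<^sup>+v. indicator A v \<partial>distr (slice_measure x) sph_space (\<lambda>p. Q (great_circle x (fst p) (snd p))))"
    using A by simp
  also have "\<dots> = (\<integral>\<^sup>+p. indicator A (Q (great_circle x (fst p) (snd p))) \<partial>slice_measure x)"
    using rotated by (intro nn_integral_distr) (simp_all add: slice_measure_def)
  also have "\<dots> = ennreal (gss_const x) * (\<integral>\<^sup>+z. F (Q z) \<partial>surf x)"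
    using Q
    by (subst nn_integral_slice_measure[OF measurable_compose[OF rotated borel_measurable_indicator[OF A]]])
      (simp add: F_def linear_great_circle orthogonal_transformation_linear)
  also have "(\<integral>\<^sup>+z. F (Q z) \<partial>surf x) = (\<integral>\<^sup>+z. F z \<partial>surf (Q x))"
    using nn_integral_distr[of Q "surf x" "surf (Q x)" F]
    by (simp add: distr_surf_orthogonal_transformation[OF Q])
  also have "gss_const x = gss_const (Q x)"
    using Q by (simp add: gss_const_def measure_surf_orthogonal_transformation)
  finally show "emeasure (distr (slice_measure x) sph_space (\<lambda>p. Q (great_circle x (fst p) (snd p)))) A =
      ennreal (gss_const (Q x)) * (\<integral>\<^sup>+z. \<integral>\<^sup>+\<omega>. indicator {0..<2*pi} \<omega> *
        indicator A (great_circle (Q x) z \<omega>) \<partial>lborel \<partial>surf (Q x))"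
    by (simp add: F_def)
qed

lemma GSS_eq_distr_great_circle:
  fixes x :: "'a::euclidean_space"
  assumes "norm x = 1"
  shows "GSS x = distr (slice_measure x) sph_space (\<lambda>p. great_circle x (fst p) (snd p))"
  using GSS_eq_distr_slice_measure[OF assms orthogonal_transformation_id] by simp

lemma sets_GSS [measurable_cong]: "sets (GSS x) = sets sph_space"
  unfolding GSS_def using sets.space_closed[of sph_space] sets.sigma_sets_eq[of sph_space]
  by (subst sets_measure_of) simp_all

lemma measurable_sph_space_orthogonal_transformation:
  fixes Q :: "'a::euclidean_space \<Rightarrow> 'a"
  assumes Q: "orthogonal_transformation Q"
  shows "Q \<in> sph_space \<rightarrow>\<^sub>M sph_space"
  unfolding sph_space_def
  using borel_measurable_orthogonal_transformation[OF Q] orthogonal_transformation_norm[OF Q]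
  by (intro measurable_restrict_space2 measurable_restrict_space1) auto

lemma distr_GSS_orthogonal_transformation:
  fixes x :: "'a::euclidean_space" and Q :: "'a \<Rightarrow> 'a"
  assumes x: "norm x = 1" and Q: "orthogonal_transformation Q"
  shows "distr (GSS x) sph_space Q = GSS (Q x)"
proof -
  have "(\<lambda>p. great_circle x (fst p) (snd p)) \<in> slice_measure x \<rightarrow>\<^sub>M sph_space"
    using measurable_great_circle[OF x] by (simp add: slice_measure_def)
  then show ?thesis
    by (simp add: GSS_eq_distr_great_circle[OF x] GSS_eq_distr_slice_measure[OF x Q] distr_distr
        measurable_sph_space_orthogonal_transformation[OF Q] comp_def)
qed

lemma nn_integral_GSS:
  fixes x :: "'a::euclidean_space" and f :: "'a \<Rightarrow> ennreal"
  assumes x: "norm x = 1" and f: "f \<in> borel_measurable borel"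
  shows "(\<integral>\<^sup>+v. f v \<partial>GSS x) = ennreal (gss_const x) *
    (\<integral>\<^sup>+z. \<integral>\<^sup>+\<omega>. indicator {0..<2*pi} \<omega> * f (great_circle x z \<omega>) \<partial>lborel \<partial>surf x)"
proof -
  have great_circle: "(\<lambda>p. great_circle x (fst p) (snd p)) \<in> slice_measure x \<rightarrow>\<^sub>M sph_space"
    using measurable_great_circle[OF x] by (simp add: slice_measure_def)
  have f': "f \<in> borel_measurable sph_space"
    using borel_measurable_sph_space f by (rule measurable_compose)
  have "(\<lambda>p. f (great_circle x (fst p) (snd p))) \<in> borel_measurable (surf x \<Otimes>\<^sub>M lborel)"
    using measurable_great_circle[OF x] f' by (rule measurable_compose)
  then show ?thesis
    using great_circle f'
    by (simp add: GSS_eq_distr_great_circle[OF x] nn_integral_distr nn_integral_slice_measure)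
qed

lemma wass_distr_le:
  fixes \<mu> :: "'a::euclidean_space measure"
  assumes sets_\<mu>: "sets \<mu> = sets sph_space" and T: "T \<in> sph_space \<rightarrow>\<^sub>M sph_space"
  shows "wass \<mu> (distr \<mu> sph_space T) \<le> (\<integral>\<^sup>+v. norm (v - T v) \<partial>\<mu>)"
proof -
  have T_\<mu>: "T \<in> \<mu> \<rightarrow>\<^sub>M sph_space"
    using T by (simp add: measurable_cong_sets[OF sets_\<mu> refl])
  have graph: "(\<lambda>v. (v, T v)) \<in> \<mu> \<rightarrow>\<^sub>M sph_space \<Otimes>\<^sub>M sph_space"
    using T_\<mu> measurable_ident_sets[OF sets_\<mu>] by (rule measurable_Pair[rotated])
  define \<gamma> where "\<gamma> = distr \<mu> (sph_space \<Otimes>\<^sub>M sph_space) (\<lambda>v. (v, T v))"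
  have "\<gamma> \<in> couplings \<mu> (distr \<mu> sph_space T)"
    unfolding couplings_def \<gamma>_def using graph T_\<mu> measurable_ident_sets[OF sets_\<mu>]
    by (simp add: distr_distr comp_def distr_id2 sets_\<mu>)
  then have "wass \<mu> (distr \<mu> sph_space T) \<le> (\<integral>\<^sup>+p. norm (fst p - snd p) \<partial>\<gamma>)"
    unfolding wass_def by (rule INF_lower)
  also have "\<dots> = (\<integral>\<^sup>+v. norm (v - T v) \<partial>\<mu>)"
  proof -
    have [measurable]: "fst \<in> sph_space \<Otimes>\<^sub>M sph_space \<rightarrow>\<^sub>M borel" "snd \<in> sph_space \<Otimes>\<^sub>M sph_space \<rightarrow>\<^sub>M borel"
      using borel_measurable_sph_space by (auto intro: measurable_compose)
    show ?thesis
      unfolding \<gamma>_def using graph by (subst nn_integral_distr) simp_all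
  qed
  finally show ?thesis .
qed

section \<open>The contraction rate\<close>

definition contraction_rate :: "real \<Rightarrow> real" where
  "contraction_rate d =
    (1 / (2 * pi)) * integral {0..2*pi} (\<lambda>\<omega>. sqrt ((cos \<omega>)\<^sup>2 + (sin \<omega>)\<^sup>2 / (d - 1)))"

lemma continuous_on_rate_integrand:
  "d > 1 \<Longrightarrow> continuous_on S (\<lambda>\<omega>. sqrt ((cos \<omega>)\<^sup>2 + (sin \<omega>)\<^sup>2 / (d - 1)))"
  by (intro continuous_intros) auto

lemma rate_integrand_pos:
  fixes d \<omega> :: real
  assumes "d > 1"
  shows "(cos \<omega>)\<^sup>2 + (sin \<omega>)\<^sup>2 / (d - 1) > 0"
proof (cases "cos \<omega> = 0")
  case True
  then have "(sin \<omega>)\<^sup>2 = 1"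
    using sin_squared_eq[of \<omega>] by simp
  with True assms show ?thesis
    by simp
qed (use assms in \<open>simp add: add_pos_nonneg\<close>)

lemma contraction_rate_nonneg: "d > 1 \<Longrightarrow> contraction_rate d \<ge> 0"
  unfolding contraction_rate_def
  by (intro mult_nonneg_nonneg integral_nonneg integrable_continuous_interval
      continuous_on_rate_integrand) auto

lemma nn_integral_rate_integrand:
  assumes "d > 1"
  shows "(\<integral>\<^sup>+\<omega>. ennreal (sqrt ((cos \<omega>)\<^sup>2 + (sin \<omega>)\<^sup>2 / (d - 1))) * indicator {0..2*pi} \<omega> \<partial>lborel) =
    ennreal (2 * pi * contraction_rate d)"
  unfolding contraction_rate_def
  by (rule nn_integral_has_integral_lebesgue')
    (auto intro!: integrable_integral integrable_continuous_interval continuous_on_rate_integrand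
      less_imp_le[OF rate_integrand_pos] assms)

lemma sin_square_has_integral: "((\<lambda>\<omega>. (sin \<omega>)\<^sup>2) has_integral pi) {0..2*pi}"
proof -
  have "((\<lambda>\<omega>. (sin \<omega>)\<^sup>2) has_integral ((2*pi/2 - sin (2*(2*pi))/4) - (0/2 - sin (2*0)/4))) {0..2*pi}"
  proof (rule fundamental_theorem_of_calculus)
    fix \<omega> :: real
    have "((\<lambda>\<omega>. \<omega>/2 - sin (2*\<omega>)/4) has_real_derivative (1/2 - cos (2*\<omega>) * 2 / 4)) (at \<omega>)"
      by (auto intro!: derivative_eq_intros)
    moreover have "1/2 - cos (2*\<omega>) * 2 / 4 = (sin \<omega>)\<^sup>2"
      using cos_double_sin[of \<omega>] by (simp add: field_simps)
    ultimately show "((\<lambda>\<omega>. \<omega>/2 - sin (2*\<omega>)/4) has_vector_derivative (sin \<omega>)\<^sup>2) (at \<omega> within {0..2*pi})"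
      by (simp add: has_real_derivative_iff_has_vector_derivative[symmetric] has_field_derivative_at_within)
  qed simp
  then show ?thesis
    by simp
qed

lemma contraction_rate_less_1:
  assumes d: "d \<ge> 3"
  shows "contraction_rate d < 1"
proof -
  define k where "k = 1 - 1 / (d - 1)"
  have k: "0 < k" "k \<le> 1"
    using d by (auto simp: k_def field_simps)
  have pointwise: "sqrt ((cos \<omega>)\<^sup>2 + (sin \<omega>)\<^sup>2 / (d - 1)) \<le> 1 - k * (sin \<omega>)\<^sup>2 / 2" for \<omega>
  proof -
    define u where "u = k * (sin \<omega>)\<^sup>2"
    have "(cos \<omega>)\<^sup>2 + (sin \<omega>)\<^sup>2 / (d - 1) = 1 - u"
      using d by (simp add: u_def k_def field_simps cos_squared_eq)
    moreover have "0 \<le> u" "u \<le> 1"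
      using k mult_le_one[OF k(2), of "(sin \<omega>)\<^sup>2"] abs_sin_le_one[of \<omega>]
      by (auto simp: u_def abs_square_le_1)
    moreover have "1 - u \<le> (1 - u / 2)\<^sup>2"
      by (simp add: power2_eq_square algebra_simps)
    ultimately show ?thesis
      by (simp add: u_def real_sqrt_le_iff')
  qed
  have "((\<lambda>\<omega>. 1 - k / 2 * (sin \<omega>)\<^sup>2) has_integral (2 * pi - k / 2 * pi)) {0..2*pi}"
    using has_integral_diff[OF has_integral_const_real[of 1 0 "2 * pi"]
        has_integral_mult_right[OF sin_square_has_integral, of "k / 2"]]
    by simp
  then have "integral {0..2*pi} (\<lambda>\<omega>. sqrt ((cos \<omega>)\<^sup>2 + (sin \<omega>)\<^sup>2 / (d - 1))) \<le> 2 * pi - k / 2 * pi"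
    using d pointwise
    by (intro has_integral_le[OF integrable_integral[OF integrable_continuous_interval]])
      (auto intro: continuous_on_rate_integrand simp: algebra_simps)
  also have "\<dots> < 2 * pi"
    using k by simp
  finally show ?thesis
    by (simp add: contraction_rate_def field_simps)
qed

section \<open>The contraction estimate\<close>

lemma sqrt_le_tangent:
  fixes q m :: real
  assumes "0 \<le> q" "0 < m"
  shows "sqrt q \<le> sqrt m + (q - m) / (2 * sqrt m)"
proof -
  have "0 \<le> (sqrt q - sqrt m)\<^sup>2"
    by simp
  then have "2 * sqrt q * sqrt m \<le> q + m"
    using assms by (simp add: power2_eq_square algebra_simps)
  then have "sqrt q \<le> (q + m) / (2 * sqrt m)"
    using assms by (simp add: field_simps)
  also have "\<dots> = sqrt m + (q - m) / (2 * sqrt m)"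
    using assms by (simp add: field_simps)
  finally show ?thesis .
qed

lemma nn_integral_sqrt_le:
  fixes M :: "'a measure" and q :: "'a \<Rightarrow> real"
  assumes "finite_measure M" and q: "integrable M q" and q_nonneg: "\<And>z. z \<in> space M \<Longrightarrow> 0 \<le> q z"
    and le: "(\<integral>z. q z \<partial>M) \<le> measure M (space M) * m" and m: "0 < m"
  shows "(\<integral>\<^sup>+z. sqrt (q z) \<partial>M) \<le> ennreal (measure M (space M) * sqrt m)"
proof -
  interpret finite_measure M by fact
  define g where "g z = sqrt m + (q z - m) / (2 * sqrt m)" for z
  have g: "integrable M g"
    unfolding g_def using q by (intro Bochner_Integration.integrable_add integrable_divide integrable_diff) auto
  have sqrt_le_g: "sqrt (q z) \<le> g z" if "z \<in> space M" for z
    unfolding g_def by (rule sqrt_le_tangent[OF q_nonneg[OF that] m])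
  have "(\<integral>\<^sup>+z. sqrt (q z) \<partial>M) \<le> (\<integral>\<^sup>+z. g z \<partial>M)"
    by (intro nn_integral_mono ennreal_leI sqrt_le_g)
  also have "\<dots> = ennreal (\<integral>z. g z \<partial>M)"
    using q_nonneg by (intro nn_integral_eq_integral[OF g] AE_I2 order_trans[OF _ sqrt_le_g]) auto
  also have "(\<integral>z. g z \<partial>M) = measure M (space M) * sqrt m + ((\<integral>z. q z \<partial>M) - measure M (space M) * m) / (2 * sqrt m)"
    unfolding g_def using q by (simp add: Bochner_Integration.integral_add integral_divide integral_diff)
  also have "\<dots> \<le> measure M (space M) * sqrt m"
    using le m by (simp add: divide_nonpos_pos)
  finally show ?thesis
    by (simp add: ennreal_leI)
qed

lemma nn_integral_surf_sqrt_le: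
  fixes x y :: "'a::euclidean_space"
  assumes x: "norm x = 1" and y: "norm y = 1" and dim: "DIM('a) \<ge> 2" and fin: "finite_measure (surf x)"
  shows "(\<integral>\<^sup>+z. sqrt ((cos \<omega>)\<^sup>2 + (sin \<omega>)\<^sup>2 * (z \<bullet> y)\<^sup>2 / (1 - (x \<bullet> y)\<^sup>2)) \<partial>surf x) \<le>
    ennreal (measure (surf x) (subsph x) * sqrt ((cos \<omega>)\<^sup>2 + (sin \<omega>)\<^sup>2 / (real DIM('a) - 1)))"
proof -
  define S where "S = measure (surf x) (subsph x)"
  define t where "t = x \<bullet> y"
  have "\<bar>t\<bar> \<le> 1"
    using Cauchy_Schwarz_ineq2[of x y] x y by (simp add: t_def)
  then have t: "0 \<le> 1 - t\<^sup>2"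
    by (simp add: abs_square_le_1)
  have "(1 - t\<^sup>2) / (1 - t\<^sup>2) \<le> 1"
    by (cases "1 - t\<^sup>2 = 0") simp_all
  then have "(sin \<omega>)\<^sup>2 / (1 - t\<^sup>2) * ((1 - t\<^sup>2) * S / (real DIM('a) - 1)) \<le> (sin \<omega>)\<^sup>2 * S / (real DIM('a) - 1)"
    using dim measure_nonneg[of "surf x" "subsph x"]
    by (simp add: S_def mult_left_le divide_right_mono)
  moreover have "(\<integral>z. (z \<bullet> y)\<^sup>2 \<partial>surf x) = (1 - t\<^sup>2) * S / (real DIM('a) - 1)"
    using integral_surf_inner_square[OF x dim fin, of y] y by (simp add: S_def t_def inner_commute)
  moreover have "(\<integral>z. (cos \<omega>)\<^sup>2 + (sin \<omega>)\<^sup>2 * (z \<bullet> y)\<^sup>2 / (1 - t\<^sup>2) \<partial>surf x) =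
      S * (cos \<omega>)\<^sup>2 + (sin \<omega>)\<^sup>2 / (1 - t\<^sup>2) * (\<integral>z. (z \<bullet> y)\<^sup>2 \<partial>surf x)"
    using integrable_surf_inner_square[OF fin, of y] finite_measure.integrable_const[OF fin]
    by (subst Bochner_Integration.integral_add) (auto simp: S_def)
  ultimately have "(\<integral>z. (cos \<omega>)\<^sup>2 + (sin \<omega>)\<^sup>2 * (z \<bullet> y)\<^sup>2 / (1 - t\<^sup>2) \<partial>surf x) \<le>
      S * ((cos \<omega>)\<^sup>2 + (sin \<omega>)\<^sup>2 / (real DIM('a) - 1))"
    by (simp add: algebra_simps)
  then have "(\<integral>\<^sup>+z. sqrt ((cos \<omega>)\<^sup>2 + (sin \<omega>)\<^sup>2 * (z \<bullet> y)\<^sup>2 / (1 - t\<^sup>2)) \<partial>surf x) \<le>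
      ennreal (measure (surf x) (space (surf x)) * sqrt ((cos \<omega>)\<^sup>2 + (sin \<omega>)\<^sup>2 / (real DIM('a) - 1)))"
    using integrable_surf_inner_square[OF fin, of y] finite_measure.integrable_const[OF fin] t dim
    by (intro nn_integral_sqrt_le[OF fin] rate_integrand_pos)
      (auto simp: S_def intro!: Bochner_Integration.integrable_add integrable_divide integrable_mult_right)
  then show ?thesis
    by (simp add: t_def)
qed

lemma nn_integral_surf_norm_diff_plane_rotation_le:
  fixes x y :: "'a::euclidean_space"
  assumes x: "norm x = 1" and y: "norm y = 1" and "x \<noteq> y" and dim: "DIM('a) \<ge> 2"
    and fin: "finite_measure (surf x)"
  shows "(\<integral>\<^sup>+z. norm (great_circle x z \<omega> - plane_rotation x y (great_circle x z \<omega>)) \<partial>surf x) \<le>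
    ennreal (norm (x - y) * measure (surf x) (subsph x) *
      sqrt ((cos \<omega>)\<^sup>2 + (sin \<omega>)\<^sup>2 / (real DIM('a) - 1)))"
proof -
  have "(\<integral>\<^sup>+z. norm (great_circle x z \<omega> - plane_rotation x y (great_circle x z \<omega>)) \<partial>surf x) =
      ennreal (norm (x - y)) *
      (\<integral>\<^sup>+z. sqrt ((cos \<omega>)\<^sup>2 + (sin \<omega>)\<^sup>2 * (z \<bullet> y)\<^sup>2 / (1 - (x \<bullet> y)\<^sup>2)) \<partial>surf x)"
    using norm_diff_plane_rotation[OF x y _ \<open>x \<noteq> y\<close>]
    by (subst nn_integral_cmult[symmetric])
      (auto intro!: nn_integral_cong borel_measurable_surf
        simp: great_circle_def subsph_def inner_commute ennreal_mult')
  also have "\<dots> \<le> ennreal (norm (x - y)) * ennreal (measure (surf x) (subsph x) *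
      sqrt ((cos \<omega>)\<^sup>2 + (sin \<omega>)\<^sup>2 / (real DIM('a) - 1)))"
    using nn_integral_surf_sqrt_le[OF x y dim fin] by (rule mult_left_mono) simp
  finally show ?thesis
    by (simp add: ennreal_mult' mult.assoc)
qed

lemma nn_integral_great_circle_plane_rotation_le:
  fixes x y :: "'a::euclidean_space"
  assumes x: "norm x = 1" and y: "norm y = 1" and "x \<noteq> y" and dim: "DIM('a) \<ge> 2"
    and fin: "finite_measure (surf x)"
  shows "(\<integral>\<^sup>+z. \<integral>\<^sup>+\<omega>. indicator {0..<2*pi} \<omega> *
      ennreal (norm (great_circle x z \<omega> - plane_rotation x y (great_circle x z \<omega>))) \<partial>lborel \<partial>surf x) \<le>
    ennreal (norm (x - y) * measure (surf x) (subsph x) * (2 * pi * contraction_rate (real DIM('a))))"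
proof -
  interpret finite_measure "surf x" by fact
  interpret pair_sigma_finite "surf x" lborel ..
  define S where "S = measure (surf x) (subsph x)"
  define D where "D z \<omega> = ennreal (norm (great_circle x z \<omega> - plane_rotation x y (great_circle x z \<omega>)))"
    for z \<omega>
  have [measurable]: "plane_rotation x y \<in> borel_measurable borel"
    by (rule borel_measurable_orthogonal_transformation[OF orthogonal_transformation_plane_rotation])
  have [measurable]: "(\<lambda>p. great_circle x (fst p) (snd p)) \<in> borel_measurable (surf x \<Otimes>\<^sub>M lborel)"
    using measurable_great_circle[OF x] borel_measurable_sph_space by (rule measurable_compose)
  have "(\<integral>\<^sup>+z. \<integral>\<^sup>+\<omega>. indicator {0..<2*pi} \<omega> * D z \<omega> \<partial>lborel \<partial>surf x) =
      (\<integral>\<^sup>+\<omega>. \<integral>\<^sup>+z. indicator {0..<2*pi} \<omega> * D z \<omega> \<partial>surf x \<partial>lborel)"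
    unfolding D_def by (rule Fubini'[symmetric]) measurable
  also have "\<dots> \<le> (\<integral>\<^sup>+\<omega>. ennreal (norm (x - y) * S) * (ennreal (sqrt ((cos \<omega>)\<^sup>2 +
      (sin \<omega>)\<^sup>2 / (real DIM('a) - 1))) * indicator {0..2*pi} \<omega>) \<partial>lborel)"
  proof (intro nn_integral_mono)
    fix \<omega> :: real
    have "(\<integral>\<^sup>+z. indicator {0..<2*pi} \<omega> * D z \<omega> \<partial>surf x) =
        indicator {0..<2*pi} \<omega> * (\<integral>\<^sup>+z. D z \<omega> \<partial>surf x)"
      unfolding D_def great_circle_def
      by (rule nn_integral_cmult) (intro borel_measurable_surf, measurable)
    also have "\<dots> \<le> indicator {0..2*pi} \<omega> * ennreal (norm (x - y) * S *
        sqrt ((cos \<omega>)\<^sup>2 + (sin \<omega>)\<^sup>2 / (real DIM('a) - 1)))"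
      using nn_integral_surf_norm_diff_plane_rotation_le[OF x y \<open>x \<noteq> y\<close> dim fin]
      by (intro mult_mono) (auto simp: D_def S_def indicator_def)
    finally show "(\<integral>\<^sup>+z. indicator {0..<2*pi} \<omega> * D z \<omega> \<partial>surf x) \<le>
        ennreal (norm (x - y) * S) * (ennreal (sqrt ((cos \<omega>)\<^sup>2 +
          (sin \<omega>)\<^sup>2 / (real DIM('a) - 1))) * indicator {0..2*pi} \<omega>)"
      by (simp add: ennreal_mult' mult_ac S_def)
  qed
  also have "\<dots> = ennreal (norm (x - y) * S) * ennreal (2 * pi * contraction_rate (real DIM('a)))"
    using dim by (subst nn_integral_cmult) (simp_all add: nn_integral_rate_integrand)
  finally show ?thesis
    by (simp add: D_def S_def ennreal_mult' mult.assoc)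
qed

lemma nn_integral_GSS_plane_rotation_le:
  fixes x y :: "'a::euclidean_space"
  assumes x: "norm x = 1" and y: "norm y = 1" and "x \<noteq> y" and dim: "DIM('a) \<ge> 2"
  shows "(\<integral>\<^sup>+v. norm (v - plane_rotation x y v) \<partial>GSS x) \<le>
    ennreal (norm (x - y) * contraction_rate (real DIM('a)))"
proof -
  define S where "S = measure (surf x) (subsph x)"
  have "plane_rotation x y \<in> borel_measurable borel"
    by (rule borel_measurable_orthogonal_transformation[OF orthogonal_transformation_plane_rotation])
  then have "(\<integral>\<^sup>+v. norm (v - plane_rotation x y v) \<partial>GSS x) = ennreal (gss_const x) *
      (\<integral>\<^sup>+z. \<integral>\<^sup>+\<omega>. indicator {0..<2*pi} \<omega> *
        ennreal (norm (great_circle x z \<omega> - plane_rotation x y (great_circle x z \<omega>))) \<partial>lborel \<partial>surf x)"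
    by (intro nn_integral_GSS[OF x]) measurable
  also have "\<dots> \<le> ennreal (norm (x - y) * contraction_rate (real DIM('a)))"
  proof (cases "S > 0")
    case False
    then have "gss_const x = 0"
      using measure_nonneg[of "surf x" "subsph x"] by (simp add: gss_const_def S_def)
    then show ?thesis
      by simp
  next
    case True
    then have "finite_measure (surf x)"
      by (intro finite_measureI) (auto simp: S_def measure_def)
    from nn_integral_great_circle_plane_rotation_le[OF assms this]
    have "ennreal (gss_const x) * (\<integral>\<^sup>+z. \<integral>\<^sup>+\<omega>. indicator {0..<2*pi} \<omega> *
        ennreal (norm (great_circle x z \<omega> - plane_rotation x y (great_circle x z \<omega>))) \<partial>lborel \<partial>surf x) \<le>
        ennreal (gss_const x) * ennreal (norm (x - y) * S * (2 * pi * contraction_rate (real DIM('a))))"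
      by (intro mult_left_mono) (simp_all add: S_def)
    also have "\<dots> = ennreal (norm (x - y) * contraction_rate (real DIM('a)))"
      using True by (simp add: gss_const_def S_def flip: ennreal_mult')
    finally show ?thesis .
  qed
  finally show ?thesis .
qed

lemma wass_GSS_le:
  fixes x y :: "'a::euclidean_space"
  assumes x: "norm x = 1" and y: "norm y = 1" and "x \<noteq> y" and dim: "DIM('a) \<ge> 2"
  shows "wass (GSS x) (GSS y) \<le> ennreal (norm (x - y) * contraction_rate (real DIM('a)))"
proof -
  have Q: "orthogonal_transformation (plane_rotation x y)"
    by (rule orthogonal_transformation_plane_rotation)
  have "GSS y = distr (GSS x) sph_space (plane_rotation x y)"
    using distr_GSS_orthogonal_transformation[OF x Q] plane_rotation_apply_self[OF x y] by simp
  then have "wass (GSS x) (GSS y) \<le> (\<integral>\<^sup>+v. norm (v - plane_rotation x y v) \<partial>GSS x)"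
    using wass_distr_le[OF sets_GSS measurable_sph_space_orthogonal_transformation[OF Q]] by simp
  also have "\<dots> \<le> ennreal (norm (x - y) * contraction_rate (real DIM('a)))"
    using assms by (rule nn_integral_GSS_plane_rotation_le)
  finally show ?thesis .
qed

lemma Dob_leI:
  fixes P :: "'a::euclidean_space \<Rightarrow> 'a measure"
  assumes "\<And>x y. x \<in> Sph \<Longrightarrow> y \<in> Sph \<Longrightarrow> x \<noteq> y \<Longrightarrow> wass (P x) (P y) \<le> ennreal (norm (x - y) * \<rho>)"
    and "0 \<le> \<rho>"
  shows "Dob P \<le> ennreal \<rho>"
  unfolding Dob_def
proof (rule SUP_least, clarify)
  fix x y :: 'a assume xy: "x \<in> Sph" "y \<in> Sph" "x \<noteq> y"
  then have "wass (P x) (P y) / ennreal (norm (x - y)) \<le>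
      ennreal (norm (x - y) * \<rho>) / ennreal (norm (x - y))"
    by (intro divide_right_mono_ennreal assms)
  also have "\<dots> = ennreal \<rho>"
    using xy \<open>0 \<le> \<rho>\<close> by (simp add: divide_ennreal)
  finally show "wass (P x) (P y) / ennreal (norm (x - y)) \<le> ennreal \<rho>" .
qed

theorem theorem1:
  assumes "DIM('a::euclidean_space) \<ge> 3"
  shows "wass_contractive (GSS :: 'a \<Rightarrow> 'a measure)
    ((1 / (2 * pi)) * integral {0..2*pi}
       (\<lambda>\<omega>. sqrt ((cos \<omega>)\<^sup>2 + (sin \<omega>)\<^sup>2 / (real DIM('a) - 1))))"
proof -
  have "Dob (GSS :: 'a \<Rightarrow> 'a measure) \<le> ennreal (contraction_rate (real DIM('a)))"
    using assms contraction_rate_nonneg[of "real DIM('a)"] by (intro Dob_leI wass_GSS_le) auto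
  moreover have "contraction_rate (real DIM('a)) < 1"
    using assms by (intro contraction_rate_less_1) simp
  ultimately show ?thesis
    by (simp add: wass_contractive_def contraction_rate_def)
qed

end
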